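(* Under the hypotheses of Lemma 7 (heterogeneous agents $\dot x_i=\sum_j\alpha_{ij}(t)(\mathrm{sat}_j(x_j)-\mathrm{sat}_i(x_i))$ with $s_1>\dots>s_N>0$, time-varying undirected graph satisfying the standing assumptions, integrally connected over $[0,\infty)$, with $\alpha_{ij}(t)\in\{0\}\cup[\alpha_{\min},\alpha_{\max}]$, $0<\alpha_{\min}\le\alpha_{\max}$), for every $i\in\mathcal V$ there exists $x_i^*$ with $\lim_{t\to\infty}x_i(t)=x_i^*$, and $x_i^*\in[-s_N,s_N]$ for all $i\in\{1,\dots,N-1\}$.
   Context: $\mathrm{sat}_i(x)=\mathrm{sign}(x)\min\{|x|,s_i\}$. Standing assumptions: $\alpha_{ij}(t)=\alpha_{ji}(t)\ge0$, each $\alpha_{ij}$ continuous on $[0,\infty)$ except on a set of measure zero; Carathéodory solutions. Integral graph: adjacency $\bar\alpha_{ij}=1$ if $\int_0^\infty\alpha_{ij}(t)dt=\infty$, else $0$; integrally connected means this graph is connected. *)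

theory Defs
  imports "HOL-Analysis.Analysis"
begin

definition sat :: "real \<Rightarrow> real \<Rightarrow> real" where
  "sat s x = sgn x * min \<bar>x\<bar> s"

definition standing_weights :: "nat \<Rightarrow> (nat \<Rightarrow> nat \<Rightarrow> real \<Rightarrow> real) \<Rightarrow> bool" where
  "standing_weights N \<alpha> \<longleftrightarrow>
     (\<forall>i<N. \<forall>j<N. \<forall>t\<ge>0. \<alpha> i j t = \<alpha> j i t \<and> \<alpha> i j t \<ge> 0) \<and>
     (\<forall>i<N. \<forall>j<N. \<exists>S. S \<in> null_sets lebesgue \<and>
        (\<forall>t\<in>{0..} - S. continuous (at t within {0..}) (\<alpha> i j)))"

definition integral_edge :: "(nat \<Rightarrow> nat \<Rightarrow> real \<Rightarrow> real) \<Rightarrow> nat \<Rightarrow> nat \<Rightarrow> bool" where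
  "integral_edge \<alpha> i j \<longleftrightarrow> (\<integral>\<^sup>+ t\<in>{0..}. ennreal (\<alpha> i j t) \<partial>lebesgue) = \<infinity>"

definition integrally_connected :: "nat \<Rightarrow> (nat \<Rightarrow> nat \<Rightarrow> real \<Rightarrow> real) \<Rightarrow> bool" where
  "integrally_connected N \<alpha> \<longleftrightarrow>
     (\<forall>i<N. \<forall>j<N. (\<lambda>a b. a < N \<and> b < N \<and> integral_edge \<alpha> a b)\<^sup>*\<^sup>* i j)"

definition sat_rhs :: "nat \<Rightarrow> (nat \<Rightarrow> real) \<Rightarrow> (nat \<Rightarrow> nat \<Rightarrow> real \<Rightarrow> real)
    \<Rightarrow> (nat \<Rightarrow> real \<Rightarrow> real) \<Rightarrow> nat \<Rightarrow> real \<Rightarrow> real" where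
  "sat_rhs N s \<alpha> x i t = (\<Sum>j<N. \<alpha> i j t * (sat (s j) (x j t) - sat (s i) (x i t)))"

definition caratheodory_solution :: "nat \<Rightarrow> (nat \<Rightarrow> real) \<Rightarrow> (nat \<Rightarrow> nat \<Rightarrow> real \<Rightarrow> real)
    \<Rightarrow> (nat \<Rightarrow> real \<Rightarrow> real) \<Rightarrow> bool" where
  "caratheodory_solution N s \<alpha> x \<longleftrightarrow>
     (\<forall>i<N. \<forall>t\<ge>0. set_integrable lebesgue {0..t} (sat_rhs N s \<alpha> x i) \<and>
        x i t = x i 0 + (LINT \<tau>:{0..t}|lebesgue. sat_rhs N s \<alpha> x i \<tau>))"

end

theory Submission
  imports Defs
begin

text \<open>For monotone \<open>h\<close>, symmetry of the weights turns \<open>\<Sum>i. h (sat (s i) (x i)) * x i'\<close> into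
  half the sum of the pairwise terms
  \<open>\<alpha> i j * (h (sat (s i) (x i)) - h (sat (s j) (x j))) * (sat (s j) (x j) - sat (s i) (x i)) \<le> 0\<close>,
  so every sum of convex potentials of the states with subgradients \<open>h \<circ> sat (s i)\<close> is
  nonincreasing.  The potentials \<open>\<bar>v\<bar>\<close>, the excess \<open>max (v - s k) 0\<close> and primitives of
  \<open>[c < sat (s i) v]\<close> for every level \<open>c\<close> give boundedness and, by second differences in \<open>c\<close>,
  convergence of sums of narrow hat functions of the states.  An oscillating agent crosses the
  centre of such a hat infinitely often, while by pigeonhole some hat is missed by all states at a
  late time; hence every state converges.  If two saturated limits differed, the agents above their
  midpoint would lose only a bounded amount of state across the cut, forcing the weight between
  the two agents to be integrable.  So the saturated limits agree along the integral graph, and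
  since \<open>s (N - 1) < s i\<close> for \<open>i < N - 1\<close>, these limits lie in \<open>[- s (N - 1), s (N - 1)]\<close>.\<close>

section \<open>Saturation\<close>

lemma sat_eq_clamp: "0 < s \<Longrightarrow> sat s v = max (-s) (min v s)"
  unfolding sat_def by (cases "v > 0"; cases "v = 0"; auto simp: sgn_if abs_if min_def max_def)

lemma abs_sat_le: "0 < s \<Longrightarrow> \<bar>sat s v\<bar> \<le> s"
  by (simp add: sat_eq_clamp)

lemma sat_le: "0 < s \<Longrightarrow> sat s v \<le> s"
  and neg_le_sat: "0 < s \<Longrightarrow> -s \<le> sat s v"
  by (auto simp: sat_eq_clamp)

lemma less_sat_iff: "0 < s \<Longrightarrow> -s \<le> c \<Longrightarrow> c < s \<Longrightarrow> c < sat s v \<longleftrightarrow> c < v"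
  by (auto simp: sat_eq_clamp)

lemma le_sat_iff: "0 < s \<Longrightarrow> -s < c \<Longrightarrow> c \<le> s \<Longrightarrow> c \<le> sat s v \<longleftrightarrow> c \<le> v"
  by (auto simp: sat_eq_clamp)

lemma sat_lipschitz: "0 < s \<Longrightarrow> \<bar>sat s u - sat s v\<bar> \<le> \<bar>u - v\<bar>"
  by (simp add: sat_eq_clamp abs_if min_def max_def)

lemma sat_uminus: "0 < s \<Longrightarrow> sat s (-v) = - sat s v"
  by (simp add: sat_eq_clamp min_def max_def)

lemma isCont_sat: "0 < s \<Longrightarrow> isCont (sat s) v"
proof -
  assume "0 < s"
  then have "sat s = (\<lambda>v. max (-s) (min v s))" by (simp add: sat_eq_clamp fun_eq_iff)
  then show ?thesis by (simp add: continuous_intros)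
qed

lemma abs_le_if_abs_sat_le: "0 < r \<Longrightarrow> r < s \<Longrightarrow> \<bar>sat s v\<bar> \<le> r \<Longrightarrow> \<bar>v\<bar> \<le> r"
  by (auto simp: sat_eq_clamp abs_le_iff min_def max_def split: if_splits)

lemma sgn_sat: "0 < s \<Longrightarrow> sgn (sat s v) = sgn v"
  by (auto simp: sat_eq_clamp sgn_if min_def max_def)

section \<open>Real functions at infinity\<close>

lemma antitone_bounded_below_convergent:
  fixes f :: "real \<Rightarrow> real"
  assumes antitone: "\<And>a t. 0 \<le> a \<Longrightarrow> a \<le> t \<Longrightarrow> f t \<le> f a"
    and bounded: "\<And>t. 0 \<le> t \<Longrightarrow> m \<le> f t"
  shows "\<exists>L. (f \<longlongrightarrow> L) at_top"
proof -
  define L where "L = Inf (f ` {0..})"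
  have bdd: "bdd_below (f ` {0..})" using bounded by (intro bdd_belowI[of _ m]) auto
  have "(f \<longlongrightarrow> L) at_top"
  proof (rule decreasing_tendsto)
    show "\<forall>\<^sub>F t in at_top. L \<le> f t"
      using eventually_ge_at_top[of 0] by eventually_elim (use bdd in \<open>auto simp: L_def intro!: cInf_lower\<close>)
    fix y assume "L < y"
    then obtain t0 where t0: "0 \<le> t0" "f t0 < y" unfolding L_def using cInf_less_iff[OF _ bdd] by auto
    show "\<forall>\<^sub>F t in at_top. f t < y"
      using eventually_ge_at_top[of t0] by eventually_elim (use antitone t0 in \<open>force\<close>)
  qed
  then show ?thesis by blast
qed

lemma convergent_not_oscillating:
  fixes f :: "real \<Rightarrow> real"
  assumes "(f \<longlongrightarrow> L) at_top" "a < b"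
    and "\<exists>\<^sub>F t in at_top. f t \<le> a" "\<exists>\<^sub>F t in at_top. b \<le> f t"
  shows False
proof (cases "L < b")
  case True
  then have "\<forall>\<^sub>F t in at_top. f t < b" using assms(1) by (intro order_tendstoD)
  with assms(4) show False by (simp add: frequently_def eventually_mono not_le)
next
  case False
  have "\<forall>\<^sub>F t in at_top. a < f t"
    using assms(1) by (rule order_tendstoD(1)) (use False assms(2) in linarith)
  with assms(3) show False by (simp add: frequently_def eventually_mono not_le)
qed

lemma bounded_nonconvergent_oscillates:
  fixes f :: "real \<Rightarrow> real"
  assumes bounded: "\<forall>\<^sub>F t in at_top. \<bar>f t\<bar> \<le> B" and not_convergent: "\<nexists>L. (f \<longlongrightarrow> L) at_top"
  obtains a b where "a < b" "\<exists>\<^sub>F t in at_top. f t < a" "\<exists>\<^sub>F t in at_top. b < f t"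
proof -
  define l where "l = Liminf at_top (\<lambda>t. ereal (f t))"
  define u where "u = Limsup at_top (\<lambda>t. ereal (f t))"
  have "l \<le> u" unfolding l_def u_def by (rule Liminf_le_Limsup) simp
  have "ereal (-B) \<le> l" unfolding l_def le_Liminf_iff
    using bounded by (auto elim!: eventually_mono simp: abs_le_iff intro: less_le_trans)
  moreover have "u \<le> ereal B" unfolding u_def Limsup_le_iff
    using bounded by (auto elim!: eventually_mono simp: abs_le_iff intro: le_less_trans[of _ "ereal B"])
  moreover have "l \<noteq> u"
  proof
    assume "l = u"
    with \<open>ereal (-B) \<le> l\<close> \<open>u \<le> ereal B\<close> obtain L where "l = ereal L" "u = ereal L"
      by (cases l) auto
    then have "((\<lambda>t. ereal (f t)) \<longlongrightarrow> ereal L) at_top"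
      by (intro Liminf_eq_Limsup) (auto simp: l_def u_def)
    with not_convergent show False by simp
  qed
  ultimately obtain a b where ab: "l < ereal a" "ereal a < ereal b" "ereal b < u"
    using \<open>l \<le> u\<close> ereal_dense2 by (metis order.not_eq_order_implies_strict)
  have "\<exists>\<^sub>F t in at_top. f t < a"
  proof (rule ccontr)
    assume "\<not> ?thesis"
    then have "\<forall>\<^sub>F t in at_top. ereal a \<le> ereal (f t)" by (simp add: not_frequently not_less)
    then have "ereal a \<le> l"
      unfolding l_def le_Liminf_iff by (auto elim!: eventually_mono intro: less_le_trans)
    with ab show False by simp
  qed
  moreover have "\<exists>\<^sub>F t in at_top. b < f t"
  proof (rule ccontr)
    assume "\<not> ?thesis"
    then have "\<forall>\<^sub>F t in at_top. ereal (f t) \<le> ereal b" by (simp add: not_frequently not_less)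
    then have "u \<le> ereal b"
      unfolding u_def Limsup_le_iff by (auto elim!: eventually_mono intro: le_less_trans[of _ "ereal b"])
    with ab show False by simp
  qed
  ultimately show thesis using ab by (intro that) auto
qed

lemma frequently_crosses:
  fixes f :: "real \<Rightarrow> real"
  assumes "continuous_on {0..} f" "a < c" "c < b"
    and "\<exists>\<^sub>F t in at_top. f t < a" "\<exists>\<^sub>F t in at_top. b < f t"
  shows "\<exists>\<^sub>F t in at_top. f t = c"
  unfolding frequently_def eventually_at_top_linorder
proof clarify
  fix T assume no_crossing: "\<forall>t\<ge>T. f t \<noteq> c"
  obtain t1 where t1: "max T 0 \<le> t1" "f t1 < a"
    using assms(4) unfolding frequently_def eventually_at_top_linorder by (metis not_less)
  obtain t2 where t2: "t1 \<le> t2" "b < f t2"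
    using assms(5) unfolding frequently_def eventually_at_top_linorder by (metis not_le)
  have "continuous_on {t1..t2} f"
    using assms(1) by (rule continuous_on_subset) (use t1 in auto)
  then obtain t where "t1 \<le> t" "t \<le> t2" "f t = c"
    using IVT'[of f t1 c t2] t1 t2 assms(2,3) by auto
  with no_crossing t1 show False by auto
qed

lemma antitone_if_quadratic_increments:
  fixes F :: "real \<Rightarrow> real"
  assumes increment: "\<And>a b. 0 \<le> a \<Longrightarrow> a \<le> b \<Longrightarrow> F b - F a \<le> C * (b - a)^2"
    and "0 \<le> a" "a \<le> t"
  shows "F t \<le> F a"
proof -
  have subdivided: "F t - F a \<le> C * (t - a)^2 / real n" if "0 < n" for n :: nat
  proof -
    define d where "d = (t - a) / real n"
    define p where "p m = a + real m * d" for m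
    have "0 \<le> d" using assms that by (simp add: d_def)
    have "p n = t" "p 0 = a" using that by (simp_all add: p_def d_def)
    then have "F t - F a = (\<Sum>m<n. F (p (Suc m)) - F (p m))"
      using sum_lessThan_telescope[of "\<lambda>m. F (p m)"] by simp
    also have "\<dots> \<le> (\<Sum>m<n. C * d^2)"
    proof (rule sum_mono)
      fix m
      have "0 \<le> p m" "p m \<le> p (Suc m)" "p (Suc m) - p m = d"
        using \<open>0 \<le> d\<close> assms(2) by (simp_all add: p_def algebra_simps)
      then show "F (p (Suc m)) - F (p m) \<le> C * d^2" using increment by metis
    qed
    also have "\<dots> = C * (t - a)^2 / real n"
      using that by (simp add: d_def power2_eq_square)
    finally show ?thesis .
  qed
  have "(\<lambda>n. C * (t - a)^2 / real n) \<longlonglongrightarrow> 0" by (rule lim_const_over_n)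
  moreover have "\<forall>\<^sub>F n in sequentially. F t - F a \<le> C * (t - a)^2 / real n"
    using eventually_gt_at_top[of 0] by eventually_elim (rule subdivided)
  ultimately have "F t - F a \<le> 0" by (rule tendsto_lowerbound) simp
  then show ?thesis by simp
qed

lemma set_nn_integral_atLeast_le:
  fixes \<phi> :: "real \<Rightarrow> real"
  assumes nonneg: "\<And>t. T \<le> t \<Longrightarrow> 0 \<le> \<phi> t"
    and integrable: "\<And>t. T \<le> t \<Longrightarrow> set_integrable lebesgue {T..t} \<phi>"
    and bounded: "\<And>t. T \<le> t \<Longrightarrow> integral {T..t} \<phi> \<le> R"
  shows "(\<lambda>t. ennreal (\<phi> t) * indicator {T..} t) \<in> borel_measurable lebesgue"
    and "(\<integral>\<^sup>+t\<in>{T..}. ennreal (\<phi> t) \<partial>lebesgue) \<le> ennreal R"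
proof -
  define F where "F n t = ennreal (indicator {T..T + real n} t *\<^sub>R \<phi> t)" for n :: nat and t
  have F_measurable: "F n \<in> borel_measurable lebesgue" for n
    using integrable[of "T + real n"] unfolding F_def[abs_def] set_integrable_def
    by (intro measurable_compose[OF _ measurable_ennreal] borel_measurable_integrable) auto
  have "incseq F"
    by (auto simp: incseq_def le_fun_def F_def indicator_def)
  have SUP_F: "(SUP n. F n t) = ennreal (\<phi> t) * indicator {T..} t" for t
  proof (cases "T \<le> t")
    case True
    obtain n :: nat where "t - T \<le> real n" using real_arch_simple by blast
    then have "F n t = ennreal (\<phi> t)" using True by (simp add: F_def)
    moreover have "F m t \<le> ennreal (\<phi> t)" for m
      using True nonneg[OF True] by (auto simp: F_def indicator_def)
    ultimately have "(SUP n. F n t) = ennreal (\<phi> t)"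
      by (metis (mono_tags) SUP_upper UNIV_I antisym SUP_least)
    then show ?thesis using True by simp
  qed (simp add: F_def)
  show "(\<lambda>t. ennreal (\<phi> t) * indicator {T..} t) \<in> borel_measurable lebesgue"
    unfolding SUP_F[symmetric] using F_measurable by measurable
  have "integral\<^sup>N lebesgue (F n) \<le> ennreal R" for n
  proof -
    have "integral\<^sup>N lebesgue (F n) = ennreal (LINT t:{T..T + real n}|lebesgue. \<phi> t)"
      unfolding F_def[abs_def] set_lebesgue_integral_def
      using integrable[of "T + real n"] nonneg
      by (intro nn_integral_eq_integral) (auto simp: set_integrable_def indicator_def)
    also have "\<dots> = ennreal (integral {T..T + real n} \<phi>)"
      using integrable[of "T + real n"] by (simp add: set_lebesgue_integral_eq_integral)
    also have "\<dots> \<le> ennreal R" using bounded[of "T + real n"] by (simp add: ennreal_leI)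
    finally show ?thesis .
  qed
  then show "(\<integral>\<^sup>+t\<in>{T..}. ennreal (\<phi> t) \<partial>lebesgue) \<le> ennreal R"
    unfolding SUP_F[symmetric] nn_integral_monotone_convergence_SUP[OF \<open>incseq F\<close> F_measurable]
    by (rule SUP_least)
qed

lemma set_nn_integral_atLeast_0_finite:
  fixes f \<phi> :: "real \<Rightarrow> real"
  assumes "0 \<le> T"
    and f_le_bound: "\<And>t. 0 \<le> t \<Longrightarrow> t \<le> T \<Longrightarrow> f t \<le> B"
    and f_le_\<phi>: "\<And>t. T \<le> t \<Longrightarrow> f t \<le> \<phi> t"
    and nonneg: "\<And>t. T \<le> t \<Longrightarrow> 0 \<le> \<phi> t"
    and integrable: "\<And>t. T \<le> t \<Longrightarrow> set_integrable lebesgue {T..t} \<phi>"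
    and bounded: "\<And>t. T \<le> t \<Longrightarrow> integral {T..t} \<phi> \<le> R"
  shows "(\<integral>\<^sup>+t\<in>{0..}. ennreal (f t) \<partial>lebesgue) < \<infinity>"
proof -
  note tail = set_nn_integral_atLeast_le[OF nonneg integrable bounded]
  have "(\<integral>\<^sup>+t\<in>{0..}. ennreal (f t) \<partial>lebesgue)
      \<le> (\<integral>\<^sup>+t. ennreal B * indicator {0..T} t + ennreal (\<phi> t) * indicator {T..} t \<partial>lebesgue)"
  proof (rule nn_integral_mono)
    fix t
    consider "t < 0" | "0 \<le> t" "t \<le> T" | "T < t" by linarith
    then show "ennreal (f t) * indicator {0..} t
        \<le> ennreal B * indicator {0..T} t + ennreal (\<phi> t) * indicator {T..} t"
    proof cases
      case 2
      then have "ennreal (f t) \<le> ennreal B" using f_le_bound by (simp add: ennreal_leI)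
      then show ?thesis using 2 by (simp add: add_increasing2)
    qed (use f_le_\<phi> \<open>0 \<le> T\<close> in \<open>auto intro: ennreal_leI\<close>)
  qed
  also have "\<dots> = ennreal B * emeasure lebesgue {0..T} + (\<integral>\<^sup>+t\<in>{T..}. ennreal (\<phi> t) \<partial>lebesgue)"
  proof (subst nn_integral_add)
    show "(\<lambda>t. ennreal B * indicator {0..T} t) \<in> borel_measurable lebesgue"
      by (intro borel_measurable_times_ennreal borel_measurable_const borel_measurable_indicator) simp
  qed (use tail(1) in \<open>auto simp: nn_integral_cmult_indicator\<close>)
  also have "\<dots> < \<infinity>"
    using neq_top_trans[OF ennreal_neq_top tail(2)] \<open>0 \<le> T\<close>
    by (simp add: ennreal_mult_less_top less_top[symmetric] ennreal_mult_eq_top_iff)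
  finally show ?thesis .
qed

lemma mono_diff_mult_nonpos: "mono h \<Longrightarrow> (h u - h v) * (v - u) \<le> (0::real)"
  by (cases "u \<le> v") (auto simp: mono_def mult_nonpos_nonneg mult_nonneg_nonpos)

lemma mult_le_of_nonpos_perturbation:
  fixes p q q' :: real
  assumes "p * q \<le> 0" "\<bar>p\<bar> \<le> P" "\<bar>q' - q\<bar> \<le> E"
  shows "p * q' \<le> P * E"
proof -
  have "p * q' = p * q + p * (q' - q)" by (simp add: algebra_simps)
  also have "\<dots> \<le> \<bar>p\<bar> * \<bar>q' - q\<bar>" using assms(1) by (simp add: abs_mult[symmetric] abs_le_iff)
  also have "\<dots> \<le> P * E" using assms(2,3) by (intro mult_mono) auto
  finally show ?thesis .
qed

lemma sum_symmetric_pairing: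
  fixes A :: "'i \<Rightarrow> 'i \<Rightarrow> 'a::comm_ring_1"
  assumes "\<And>i j. i \<in> I \<Longrightarrow> j \<in> I \<Longrightarrow> A i j = A j i"
  shows "2 * (\<Sum>i\<in>I. \<sigma> i * (\<Sum>j\<in>I. A i j * (w j - w i)))
    = (\<Sum>i\<in>I. \<Sum>j\<in>I. A i j * ((\<sigma> i - \<sigma> j) * (w j - w i)))"
proof -
  define S where "S = (\<Sum>i\<in>I. \<Sum>j\<in>I. \<sigma> i * A i j * (w j - w i))"
  define S' where "S' = (\<Sum>i\<in>I. \<Sum>j\<in>I. \<sigma> j * A i j * (w i - w j))"
  have "(\<Sum>i\<in>I. \<sigma> i * (\<Sum>j\<in>I. A i j * (w j - w i))) = S"
    by (simp add: S_def sum_distrib_left mult.assoc)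
  moreover have "S = S'"
    unfolding S_def S'_def by (subst sum.swap) (use assms in \<open>auto intro!: sum.cong\<close>)
  moreover have "S + S' = (\<Sum>i\<in>I. \<Sum>j\<in>I. \<sigma> i * A i j * (w j - w i) + \<sigma> j * A i j * (w i - w j))"
    by (simp only: S_def S'_def sum.distrib)
  ultimately have "2 * (\<Sum>i\<in>I. \<sigma> i * (\<Sum>j\<in>I. A i j * (w j - w i)))
      = (\<Sum>i\<in>I. \<Sum>j\<in>I. \<sigma> i * A i j * (w j - w i) + \<sigma> j * A i j * (w i - w j))"
    by (simp only: mult_2)
  also have "\<dots> = (\<Sum>i\<in>I. \<Sum>j\<in>I. A i j * ((\<sigma> i - \<sigma> j) * (w j - w i)))"
    by (intro sum.cong refl) (simp only: algebra_simps)
  finally show ?thesis .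
qed

lemma exists_index_avoiding:
  fixes I :: "nat \<Rightarrow> 'a set"
  assumes "finite P" "card P < M"
    and disjoint: "\<And>l l' p. p \<in> I l \<Longrightarrow> p \<in> I l' \<Longrightarrow> l = l'"
  shows "\<exists>l<M. P \<inter> I l = {}"
proof (rule ccontr)
  assume "\<not> ?thesis"
  then have "{..<M} \<subseteq> (\<Union>p\<in>P. {l. p \<in> I l})" by auto
  moreover have "\<exists>l0. {l. p \<in> I l} \<subseteq> {l0}" for p
    using disjoint by blast
  then have "finite {l. p \<in> I l}" and hits_le_1: "card {l. p \<in> I l} \<le> 1" for p
    using finite_subset card_mono[of "{_}"] by (metis finite.emptyI finite_insert, fastforce)
  ultimately have "card {..<M} \<le> card (\<Union>p\<in>P. {l. p \<in> I l})"
    using assms(1) by (intro card_mono) auto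
  also have "\<dots> \<le> (\<Sum>p\<in>P. card {l. p \<in> I l})" by (rule card_UN_le[OF assms(1)])
  also have "\<dots> \<le> card P" using hits_le_1 sum_mono[of P "\<lambda>p. card {l. p \<in> I l}" "\<lambda>_. 1"] by simp
  finally show False using assms(2) by simp
qed

lemma disjoint_windows:
  fixes a b :: real and M :: nat
  assumes "a < b"
  obtains d c where "0 < d" "\<And>l. l < M \<Longrightarrow> a < c l - d \<and> c l + d < b"
    "\<And>l l' p. p \<in> {c l - d .. c l + d} \<Longrightarrow> p \<in> {c l' - d .. c l' + d} \<Longrightarrow> l = l'"
proof
  define d where "d = (b - a) / (4 * real M + 4)"
  show "0 < d" using assms by (simp add: d_def add_pos_nonneg)
  show "a < (a + (4 * real l + 2) * d) - d \<and> (a + (4 * real l + 2) * d) + d < b" if "l < M" for l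
  proof -
    have "(4 * real l + 3) * d < (4 * real M + 4) * d" using \<open>0 < d\<close> that by (intro mult_strict_right_mono) auto
    moreover have "(4 * real M + 4) * d = b - a" by (simp add: d_def)
    moreover have "0 < (4 * real l + 1) * d" using \<open>0 < d\<close> by simp
    ultimately show ?thesis by (simp add: algebra_simps)
  qed
  show "l = l'" if "p \<in> {a + (4 * real l + 2) * d - d .. a + (4 * real l + 2) * d + d}"
    "p \<in> {a + (4 * real l' + 2) * d - d .. a + (4 * real l' + 2) * d + d}" for l l' p
  proof (rule ccontr)
    assume "l \<noteq> l'"
    then have "1 \<le> \<bar>real l - real l'\<bar>" by linarith
    then have "4 * d \<le> 4 * d * \<bar>real l - real l'\<bar>"
      using \<open>0 < d\<close> mult_left_mono[of 1 "\<bar>real l - real l'\<bar>" "4 * d"] by simp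
    also have "\<dots> = \<bar>(a + (4 * real l + 2) * d) - (a + (4 * real l' + 2) * d)\<bar>"
    proof -
      have "(a + (4 * real l + 2) * d) - (a + (4 * real l' + 2) * d) = 4 * d * (real l - real l')"
        by (simp add: algebra_simps)
      then show ?thesis using \<open>0 < d\<close> by (simp add: abs_mult)
    qed
    also have "\<dots> \<le> 2 * d" using that by (simp add: abs_le_iff)
    finally show False using \<open>0 < d\<close> by simp
  qed
qed

section \<open>Crossing potentials and hats\<close>

text \<open>A primitive of \<open>v \<mapsto> [c < sat r v]\<close>; sums of these over the agents are Lyapunov functions
  for every level \<open>c\<close>.\<close>
definition crossing_potential :: "real \<Rightarrow> real \<Rightarrow> real \<Rightarrow> real" where
  "crossing_potential r c v = (if c < -r then v else if c < r then max (v - c) 0 else 0)"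

lemma crossing_potential_subgradient:
  assumes "0 < r"
  shows "crossing_potential r c v - crossing_potential r c u \<le> (if c < sat r v then 1 else 0) * (v - u)"
proof -
  consider "c < -r" | "-r \<le> c" "c < r" | "r \<le> c" by linarith
  then show ?thesis
  proof cases
    case 1
    then have "c < sat r v" using neg_le_sat[OF assms, of v] by linarith
    then show ?thesis using 1 by (simp add: crossing_potential_def)
  next
    case 2
    then have "c < sat r v \<longleftrightarrow> c < v" by (rule less_sat_iff[OF assms])
    then show ?thesis using 2 by (auto simp: crossing_potential_def)
  next
    case 3
    then have "\<not> c < sat r v" using sat_le[OF assms, of v] by linarith
    then show ?thesis using 3 assms by (simp add: crossing_potential_def)
  qed
qed

lemma crossing_potential_ge: "- \<bar>v\<bar> \<le> crossing_potential r c v"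
  by (simp add: crossing_potential_def le_max_iff_disj abs_if)

definition hat :: "real \<Rightarrow> real \<Rightarrow> real \<Rightarrow> real" where
  "hat c d v = max (v - (c - d)) 0 - 2 * max (v - c) 0 + max (v - (c + d)) 0"

lemma hat_nonneg: "0 < d \<Longrightarrow> 0 \<le> hat c d v"
  by (auto simp: hat_def max_def)

lemma hat_center: "0 < d \<Longrightarrow> hat c d c = d"
  by (auto simp: hat_def max_def)

lemma hat_eq_0_outside: "0 < d \<Longrightarrow> v \<notin> {c - d <..< c + d} \<Longrightarrow> hat c d v = 0"
  by (auto simp: hat_def max_def)

lemma crossing_potential_second_difference:
  assumes "0 < d" "0 < r" "r \<notin> {c - d .. c + d}" "-r \<notin> {c - d .. c + d}"
  shows "crossing_potential r (c - d) v - 2 * crossing_potential r c v + crossing_potential r (c + d) v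
    = (if -r < c - d \<and> c + d < r then hat c d v else 0)"
proof -
  consider "c + d < -r" | "-r < c - d" "c + d < r" | "r < c - d"
    using assms(3,4) by (auto simp: not_le)
  then show ?thesis
  proof cases
    case 1
    then show ?thesis using assms(1) by (simp add: crossing_potential_def)
  next
    case 2
    then show ?thesis using assms(1) by (simp add: crossing_potential_def hat_def)
  next
    case 3
    then show ?thesis using assms(1,2) by (simp add: crossing_potential_def)
  qed
qed

section \<open>The saturated consensus dynamics\<close>

locale saturated_consensus =
  fixes N :: nat and s :: "nat \<Rightarrow> real" and \<alpha> :: "nat \<Rightarrow> nat \<Rightarrow> real \<Rightarrow> real"
    and x :: "nat \<Rightarrow> real \<Rightarrow> real" and amax :: real
  assumes s_pos: "\<And>i. i < N \<Longrightarrow> 0 < s i"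
    and s_inj: "inj_on s {..<N}"
    and weight_sym: "\<And>i j t. i < N \<Longrightarrow> j < N \<Longrightarrow> 0 \<le> t \<Longrightarrow> \<alpha> i j t = \<alpha> j i t"
    and weight_nonneg: "\<And>i j t. i < N \<Longrightarrow> j < N \<Longrightarrow> 0 \<le> t \<Longrightarrow> 0 \<le> \<alpha> i j t"
    and weight_le: "\<And>i j t. i < N \<Longrightarrow> j < N \<Longrightarrow> 0 \<le> t \<Longrightarrow> \<alpha> i j t \<le> amax"
    and solution: "caratheodory_solution N s \<alpha> x"
begin

abbreviation rhs :: "nat \<Rightarrow> real \<Rightarrow> real" where
  "rhs i \<equiv> sat_rhs N s \<alpha> x i"

definition speed_bound :: real where
  "speed_bound = real N * amax * (2 * (\<Sum>j<N. s j))"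

lemma abs_rhs_le:
  assumes "i < N" "0 \<le> t"
  shows "\<bar>rhs i t\<bar> \<le> speed_bound"
proof -
  have "\<bar>rhs i t\<bar> \<le> (\<Sum>j<N. \<bar>\<alpha> i j t * (sat (s j) (x j t) - sat (s i) (x i t))\<bar>)"
    unfolding sat_rhs_def by (rule sum_abs)
  also have "\<dots> \<le> (\<Sum>j<N. amax * (2 * (\<Sum>j<N. s j)))"
  proof (rule sum_mono)
    fix j assume "j \<in> {..<N}"
    then have "s i \<le> (\<Sum>j<N. s j)" "s j \<le> (\<Sum>j<N. s j)"
      using assms s_pos by (auto intro!: member_le_sum simp: less_imp_le)
    moreover have "\<bar>sat (s i) (x i t)\<bar> \<le> s i" "\<bar>sat (s j) (x j t)\<bar> \<le> s j"
      using \<open>j \<in> {..<N}\<close> assms s_pos abs_sat_le by auto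
    ultimately have "\<bar>sat (s j) (x j t) - sat (s i) (x i t)\<bar> \<le> 2 * (\<Sum>j<N. s j)"
      by linarith
    then show "\<bar>\<alpha> i j t * (sat (s j) (x j t) - sat (s i) (x i t))\<bar> \<le> amax * (2 * (\<Sum>j<N. s j))"
      using \<open>j \<in> {..<N}\<close> assms weight_nonneg weight_le order_trans[OF weight_nonneg weight_le]
      unfolding abs_mult by (intro mult_mono) auto
  qed
  finally show ?thesis by (simp add: speed_bound_def)
qed

lemma speed_bound_nonneg: "0 \<le> speed_bound"
proof (cases "N = 0")
  case True
  then show ?thesis unfolding speed_bound_def by simp
next
  case False
  then show ?thesis using abs_rhs_le[of 0 0] by linarith
qed

lemma rhs_set_integrable: "i < N \<Longrightarrow> 0 \<le> t \<Longrightarrow> set_integrable lebesgue {0..t} (rhs i)"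
  using solution unfolding caratheodory_solution_def by blast

lemma x_eq_set_integral: "i < N \<Longrightarrow> 0 \<le> t \<Longrightarrow> x i t = x i 0 + (LINT \<tau>:{0..t}|lebesgue. rhs i \<tau>)"
  using solution unfolding caratheodory_solution_def by blast

lemma x_increment:
  assumes "i < N" "0 \<le> a" "a \<le> b"
  shows "rhs i integrable_on {a..b}" and "x i b - x i a = integral {a..b} (rhs i)"
proof -
  have from_0: "rhs i integrable_on {0..t}" "x i t = x i 0 + integral {0..t} (rhs i)" if "0 \<le> t" for t
    using x_eq_set_integral[OF assms(1) that] set_lebesgue_integral_eq_integral[OF rhs_set_integrable[OF assms(1) that]]
    by simp_all
  show "rhs i integrable_on {a..b}"
    by (rule integrable_subinterval_real[OF from_0(1)[of b]]) (use assms in auto)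
  show "x i b - x i a = integral {a..b} (rhs i)"
    using Henstock_Kurzweil_Integration.integral_combine[OF assms(2,3) from_0(1)] from_0(2)[of a] from_0(2)[of b] assms
    by simp
qed

lemma x_lipschitz: "i < N \<Longrightarrow> speed_bound-lipschitz_on {0..} (x i)"
proof -
  assume "i < N"
  have "\<bar>x i b - x i a\<bar> \<le> speed_bound * (b - a)" if "0 \<le> a" "a \<le> b" for a b
    using has_integral_bound[where a=a and b=b, unfolded cbox_interval, OF speed_bound_nonneg
        integrable_integral[OF x_increment(1)[OF \<open>i < N\<close> that]]]
      abs_rhs_le[OF \<open>i < N\<close>] x_increment(2)[OF \<open>i < N\<close> that] that
    by simp
  note increment_le = this
  have "dist (x i a) (x i b) \<le> speed_bound * dist a b" if "0 \<le> a" "0 \<le> b" for a b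
  proof (cases "a \<le> b")
    case True
    then show ?thesis using increment_le[of a b] that by (simp add: dist_real_def abs_minus_commute)
  next
    case False
    then show ?thesis using increment_le[of b a] that by (simp add: dist_real_def)
  qed
  then show ?thesis by (intro lipschitz_onI speed_bound_nonneg) auto
qed

lemma x_continuous: "i < N \<Longrightarrow> continuous_on {0..} (x i)"
  using x_lipschitz by (rule lipschitz_on_continuous_on)


text \<open>With the weights \<open>h (sat (s i) (x i b))\<close> frozen at time \<open>b\<close>, the symmetric pairing would be
  nonpositive at \<open>\<tau> = b\<close>; the Lipschitz bound on the states controls the error for \<open>\<tau> \<in> [a, b]\<close>.\<close>
lemma weighted_rhs_le:
  fixes h :: "real \<Rightarrow> real"
  assumes h_mono: "mono h" and h_bounded: "\<And>v. \<bar>h v\<bar> \<le> B"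
    and "0 \<le> a" "a \<le> \<tau>" "\<tau> \<le> b"
  shows "(\<Sum>i<N. h (sat (s i) (x i b)) * rhs i \<tau>) \<le> 2 * real N^2 * amax * B * speed_bound * (b - a)"
proof -
  define \<sigma> where "\<sigma> i = h (sat (s i) (x i b))" for i
  define w where "w k = sat (s k) (x k \<tau>)" for k
  define v where "v k = sat (s k) (x k b)" for k
  define e where "e = speed_bound * (b - a)"
  have w_near_v: "\<bar>w k - v k\<bar> \<le> e" if "k < N" for k
  proof -
    have "\<bar>w k - v k\<bar> \<le> dist (x k \<tau>) (x k b)"
      using sat_lipschitz[OF s_pos[OF that]] by (simp add: w_def v_def dist_real_def)
    also have "\<dots> \<le> speed_bound * dist \<tau> b"
      using assms(3-5) by (intro lipschitz_onD[OF x_lipschitz[OF that]]) auto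
    also have "\<dots> \<le> e"
      using assms(4,5) speed_bound_nonneg by (simp add: e_def dist_real_def mult_left_mono)
    finally show ?thesis .
  qed
  have "rhs i \<tau> = (\<Sum>j<N. \<alpha> i j \<tau> * (w j - w i))" for i
    by (simp add: sat_rhs_def w_def)
  then have "2 * (\<Sum>i<N. \<sigma> i * rhs i \<tau>) = (\<Sum>i<N. \<Sum>j<N. \<alpha> i j \<tau> * ((\<sigma> i - \<sigma> j) * (w j - w i)))"
    using weight_sym assms(3,4) by (simp only:) (rule sum_symmetric_pairing, auto)
  also have "\<dots> \<le> (\<Sum>i<N. \<Sum>j<N. amax * (2 * B * (2 * e)))"
  proof (intro sum_mono)
    fix i j assume "i \<in> {..<N}" "j \<in> {..<N}"
    have "(\<sigma> i - \<sigma> j) * (w j - w i) \<le> 2 * B * (2 * e)"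
    proof (rule mult_le_of_nonpos_perturbation)
      show "(\<sigma> i - \<sigma> j) * (v j - v i) \<le> 0"
        unfolding \<sigma>_def v_def by (rule mono_diff_mult_nonpos[OF h_mono])
      show "\<bar>\<sigma> i - \<sigma> j\<bar> \<le> 2 * B"
        using h_bounded[of "sat (s i) (x i b)"] h_bounded[of "sat (s j) (x j b)"] by (simp add: \<sigma>_def)
      show "\<bar>(w j - w i) - (v j - v i)\<bar> \<le> 2 * e"
        using w_near_v[of i] w_near_v[of j] \<open>i \<in> {..<N}\<close> \<open>j \<in> {..<N}\<close> by (auto simp: abs_le_iff)
    qed
    moreover have "0 \<le> \<alpha> i j \<tau>" "\<alpha> i j \<tau> \<le> amax" "0 \<le> 2 * B * (2 * e)"
      using \<open>i \<in> {..<N}\<close> \<open>j \<in> {..<N}\<close> assms(3,4) weight_nonneg weight_le w_near_v[of i]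
        h_bounded[of 0] by auto
    ultimately show "\<alpha> i j \<tau> * ((\<sigma> i - \<sigma> j) * (w j - w i)) \<le> amax * (2 * B * (2 * e))"
      by (meson mult_left_mono mult_right_mono order_trans)
  qed
  finally show ?thesis by (simp add: \<sigma>_def e_def power2_eq_square algebra_simps)
qed

lemma potential_antitone:
  fixes h :: "real \<Rightarrow> real" and \<Psi> :: "nat \<Rightarrow> real \<Rightarrow> real"
  assumes h_mono: "mono h" and h_bounded: "\<And>v. \<bar>h v\<bar> \<le> B"
    and subgradient: "\<And>i u v. i < N \<Longrightarrow> \<Psi> i v - \<Psi> i u \<le> h (sat (s i) v) * (v - u)"
    and "0 \<le> a" "a \<le> t"
  shows "(\<Sum>i<N. \<Psi> i (x i t)) \<le> (\<Sum>i<N. \<Psi> i (x i a))"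
proof (rule antitone_if_quadratic_increments[where F = "\<lambda>r. \<Sum>i<N. \<Psi> i (x i r)", OF _ assms(4,5)])
  fix a b :: real assume ab: "0 \<le> a" "a \<le> b"
  define \<sigma> where "\<sigma> i = h (sat (s i) (x i b))" for i
  define C where "C = 2 * real N^2 * amax * B * speed_bound"
  have "(\<Sum>i<N. \<Psi> i (x i b)) - (\<Sum>i<N. \<Psi> i (x i a)) \<le> (\<Sum>i<N. \<sigma> i * (x i b - x i a))"
    unfolding sum_subtractf[symmetric] \<sigma>_def by (intro sum_mono subgradient) simp
  also have "\<dots> = integral {a..b} (\<lambda>\<tau>. \<Sum>i<N. \<sigma> i * rhs i \<tau>)"
    using x_increment[OF _ ab] by (subst integral_sum) (auto intro: integrable_on_mult_right)
  also have "\<dots> \<le> integral {a..b} (\<lambda>\<tau>. C * (b - a))"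
    using x_increment(1)[OF _ ab] weighted_rhs_le[OF h_mono h_bounded ab(1)]
    by (intro integral_le integrable_sum integrable_on_mult_right) (auto simp: \<sigma>_def C_def)
  also have "\<dots> = C * (b - a)^2"
    using ab by (simp add: power2_eq_square)
  finally show "(\<Sum>i<N. \<Psi> i (x i b)) - (\<Sum>i<N. \<Psi> i (x i a)) \<le> C * (b - a)^2" .
qed

lemma x_bounded: "\<exists>R. \<forall>i<N. \<forall>t\<ge>0. \<bar>x i t\<bar> \<le> R"
proof (intro exI allI impI)
  fix i t assume "i < N" "0 \<le> (t::real)"
  have "(\<Sum>j<N. \<bar>x j t\<bar>) \<le> (\<Sum>j<N. \<bar>x j 0\<bar>)"
  proof (rule potential_antitone[where h = sgn and B = 1])
    show "mono (sgn :: real \<Rightarrow> real)" by (auto simp: mono_def sgn_if)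
    show "\<bar>v\<bar> - \<bar>u\<bar> \<le> sgn (sat (s j) v) * (v - u)" if "j < N" for j and u v :: real
      using sgn_sat[OF s_pos[OF that], of v] by (auto simp: sgn_if abs_if)
  qed (use \<open>0 \<le> t\<close> in \<open>auto simp: abs_sgn_eq\<close>)
  moreover have "\<bar>x i t\<bar> \<le> (\<Sum>j<N. \<bar>x j t\<bar>)"
    using \<open>i < N\<close> by (intro member_le_sum) auto
  ultimately show "\<bar>x i t\<bar> \<le> (\<Sum>j<N. \<bar>x j 0\<bar>)" by linarith
qed


definition crossing_sum :: "real \<Rightarrow> real \<Rightarrow> real" where
  "crossing_sum c t = (\<Sum>j<N. crossing_potential (s j) c (x j t))"

lemma crossing_sum_convergent: "\<exists>L. (crossing_sum c \<longlongrightarrow> L) at_top"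
proof -
  obtain R where R: "\<And>i t. i < N \<Longrightarrow> 0 \<le> t \<Longrightarrow> \<bar>x i t\<bar> \<le> R" using x_bounded by blast
  show ?thesis
  proof (rule antitone_bounded_below_convergent)
    show "crossing_sum c t \<le> crossing_sum c a" if "0 \<le> a" "a \<le> t" for a t
      unfolding crossing_sum_def
      by (rule potential_antitone[where h = "\<lambda>v. if c < v then 1 else 0" and B = 1, OF _ _ _ that])
        (auto simp: mono_def s_pos crossing_potential_subgradient)
    show "- (real N * R) \<le> crossing_sum c t" if "0 \<le> t" for t
    proof -
      have "(\<Sum>j<N. - R) \<le> crossing_sum c t"
        unfolding crossing_sum_def
        using R that by (intro sum_mono order_trans[OF _ crossing_potential_ge]) auto
      then show ?thesis by simp
    qed
  qed
qed

text \<open>The excess of agent \<open>k\<close> is the difference of two Lyapunov functions: the excesses over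
  \<open>s k\<close> summed over the agents with \<open>s k \<le> s j\<close> and over those with \<open>s k < s j\<close>, the latter being
  \<open>crossing_sum (s k)\<close>.  Injectivity of \<open>s\<close> leaves only agent \<open>k\<close> in the difference.\<close>
lemma excess_convergent:
  assumes "k < N"
  shows "\<exists>E. ((\<lambda>t. max (x k t - s k) 0) \<longlongrightarrow> E) at_top"
proof -
  define F where "F t = (\<Sum>j<N. if s k \<le> s j then max (x j t - s k) 0 else 0)" for t
  have "\<exists>L. (F \<longlongrightarrow> L) at_top"
  proof (rule antitone_bounded_below_convergent)
    show "F t \<le> F a" if "0 \<le> a" "a \<le> t" for a t
      unfolding F_def
    proof (rule potential_antitone[where h = "\<lambda>v. if s k \<le> v then 1 else 0" and B = 1, OF _ _ _ that])
      fix j and u v :: real assume "j < N"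
      show "(if s k \<le> s j then max (v - s k) 0 else 0) - (if s k \<le> s j then max (u - s k) 0 else 0)
          \<le> (if s k \<le> sat (s j) v then 1 else 0) * (v - u)"
      proof (cases "s k \<le> s j")
        case True
        have "-s j < s k" using s_pos[OF \<open>j < N\<close>] s_pos[OF assms] by linarith
        then have "s k \<le> sat (s j) v \<longleftrightarrow> s k \<le> v" using le_sat_iff s_pos \<open>j < N\<close> True by blast
        then show ?thesis using True by auto
      next
        case False
        then show ?thesis using sat_le[OF s_pos[OF \<open>j < N\<close>], of v] by auto
      qed
    qed (auto simp: mono_def)
  qed (auto simp: F_def intro: sum_nonneg)
  then obtain L where "(F \<longlongrightarrow> L) at_top" by blast
  moreover obtain L' where "(crossing_sum (s k) \<longlongrightarrow> L') at_top"
    using crossing_sum_convergent by blast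
  ultimately have "((\<lambda>t. F t - crossing_sum (s k) t) \<longlongrightarrow> L - L') at_top"
    by (rule tendsto_diff)
  moreover have "F t - crossing_sum (s k) t = max (x k t - s k) 0" for t
  proof -
    have "F t - crossing_sum (s k) t = (\<Sum>j<N. if j = k then max (x k t - s k) 0 else 0)"
      unfolding F_def crossing_sum_def sum_subtractf[symmetric]
    proof (intro sum.cong refl)
      fix j assume "j \<in> {..<N}"
      then have "s j = s k \<longleftrightarrow> j = k" "0 < s j" using inj_onD[OF s_inj] assms s_pos by auto
      with s_pos[OF assms] show "(if s k \<le> s j then max (x j t - s k) 0 else 0)
          - crossing_potential (s j) (s k) (x j t) = (if j = k then max (x k t - s k) 0 else 0)"
        by (auto simp: crossing_potential_def)
    qed
    then show ?thesis using assms by simp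
  qed
  ultimately show ?thesis by auto
qed

lemma not_oscillating_above:
  assumes "k < N" "a < b" "s k < b"
    and "\<exists>\<^sub>F t in at_top. x k t < a" "\<exists>\<^sub>F t in at_top. b < x k t"
  shows False
proof -
  obtain E where "((\<lambda>t. max (x k t - s k) 0) \<longlongrightarrow> E) at_top"
    using excess_convergent[OF assms(1)] by blast
  then show False
  proof (rule convergent_not_oscillating)
    show "max (a - s k) 0 < b - s k" using assms(2,3) by auto
    show "\<exists>\<^sub>F t in at_top. max (x k t - s k) 0 \<le> max (a - s k) 0"
      using assms(4) by (rule frequently_elim1) auto
    show "\<exists>\<^sub>F t in at_top. b - s k \<le> max (x k t - s k) 0"
      using assms(5) by (rule frequently_elim1) auto
  qed
qed


lemma saturated_consensus_uminus: "saturated_consensus N s \<alpha> (\<lambda>i t. - x i t) amax"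
proof
  have rhs_uminus: "sat_rhs N s \<alpha> (\<lambda>i t. - x i t) i = (\<lambda>\<tau>. (-1) * rhs i \<tau>)" if "i < N" for i
  proof
    fix \<tau>
    have "sat_rhs N s \<alpha> (\<lambda>i t. - x i t) i \<tau> = (\<Sum>j<N. - (\<alpha> i j \<tau> * (sat (s j) (x j \<tau>) - sat (s i) (x i \<tau>))))"
      unfolding sat_rhs_def by (intro sum.cong refl) (use s_pos that in \<open>simp add: sat_uminus algebra_simps\<close>)
    then show "sat_rhs N s \<alpha> (\<lambda>i t. - x i t) i \<tau> = (-1) * rhs i \<tau>"
      by (simp add: sat_rhs_def sum_negf)
  qed
  show "caratheodory_solution N s \<alpha> (\<lambda>i t. - x i t)"
    unfolding caratheodory_solution_def
  proof (intro allI impI conjI)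
    fix i and t :: real assume "i < N" "0 \<le> t"
    show "set_integrable lebesgue {0..t} (sat_rhs N s \<alpha> (\<lambda>i t. - x i t) i)"
      unfolding rhs_uminus[OF \<open>i < N\<close>] using rhs_set_integrable[OF \<open>i < N\<close> \<open>0 \<le> t\<close>]
      by (rule set_integrable_mult_right)
    show "- x i t = - x i 0 + (LINT \<tau>:{0..t}|lebesgue. sat_rhs N s \<alpha> (\<lambda>i t. - x i t) i \<tau>)"
      unfolding rhs_uminus[OF \<open>i < N\<close>] set_integral_mult_right
      using x_eq_set_integral[OF \<open>i < N\<close> \<open>0 \<le> t\<close>] by simp
  qed
qed (use s_pos s_inj weight_sym weight_nonneg weight_le in auto)

definition hat_sum :: "real \<Rightarrow> real \<Rightarrow> real \<Rightarrow> real" where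
  "hat_sum c d t = (\<Sum>j<N. if -s j < c - d \<and> c + d < s j then hat c d (x j t) else 0)"

lemma hat_sum_convergent:
  assumes "0 < d" and avoid: "\<And>j. j < N \<Longrightarrow> s j \<notin> {c - d .. c + d} \<and> -s j \<notin> {c - d .. c + d}"
  shows "\<exists>L. (hat_sum c d \<longlongrightarrow> L) at_top"
proof -
  have hat_sum_eq: "crossing_sum (c - d) t - 2 * crossing_sum c t + crossing_sum (c + d) t = hat_sum c d t"
    for t
  proof -
    have "crossing_sum (c - d) t - 2 * crossing_sum c t + crossing_sum (c + d) t
      = (\<Sum>j<N. crossing_potential (s j) (c - d) (x j t) - 2 * crossing_potential (s j) c (x j t)
          + crossing_potential (s j) (c + d) (x j t))"
      by (simp add: crossing_sum_def sum.distrib sum_subtractf sum_distrib_left)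
    also have "\<dots> = hat_sum c d t"
      unfolding hat_sum_def using assms s_pos
      by (intro sum.cong refl crossing_potential_second_difference) auto
    finally show ?thesis .
  qed
  obtain L1 L2 L3 where "(crossing_sum (c - d) \<longlongrightarrow> L1) at_top"
      "(crossing_sum c \<longlongrightarrow> L2) at_top" "(crossing_sum (c + d) \<longlongrightarrow> L3) at_top"
    using crossing_sum_convergent by meson
  then have "((\<lambda>t. crossing_sum (c - d) t - 2 * crossing_sum c t + crossing_sum (c + d) t)
      \<longlongrightarrow> L1 - 2 * L2 + L3) at_top"
    by (intro tendsto_intros)
  then show ?thesis unfolding hat_sum_eq by blast
qed

text \<open>Each time \<open>x k\<close> crosses the centre \<open>c\<close> its hat contributes \<open>d\<close>, and a convergent
  function that is frequently \<open>\<ge> d\<close> is eventually \<open>> d / 2\<close>.\<close>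
lemma hat_sum_eventually_gt:
  assumes "k < N" "0 < d" "-s k \<le> a" "a < c - d" "c + d < b" "b \<le> s k"
    and avoid: "\<And>j. j < N \<Longrightarrow> s j \<notin> {c - d .. c + d} \<and> -s j \<notin> {c - d .. c + d}"
    and below: "\<exists>\<^sub>F t in at_top. x k t < a" and above: "\<exists>\<^sub>F t in at_top. b < x k t"
  shows "\<forall>\<^sub>F t in at_top. d / 2 < hat_sum c d t"
proof -
  obtain L where L: "(hat_sum c d \<longlongrightarrow> L) at_top"
    using hat_sum_convergent[OF assms(2) avoid] by blast
  have "\<exists>\<^sub>F t in at_top. x k t = c"
    using frequently_crosses[OF x_continuous[OF assms(1)] _ _ below above] assms(2,4,5) by simp
  then have "\<exists>\<^sub>F t in at_top. d \<le> hat_sum c d t"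
  proof (rule frequently_elim1)
    fix t assume "x k t = c"
    then have "d = (if -s k < c - d \<and> c + d < s k then hat c d (x k t) else 0)"
      using assms(3-6) hat_center[OF assms(2)] by simp
    also have "\<dots> \<le> hat_sum c d t"
      unfolding hat_sum_def using assms(1) hat_nonneg[OF assms(2)] by (intro member_le_sum) auto
    finally show "d \<le> hat_sum c d t" .
  qed
  moreover have "d \<le> L"
  proof (rule ccontr)
    assume "\<not> d \<le> L"
    then have "\<forall>\<^sub>F t in at_top. hat_sum c d t < d" using L by (intro order_tendstoD(2)) auto
    then have "\<not> (\<exists>\<^sub>F t in at_top. d \<le> hat_sum c d t)" by (simp add: not_frequently not_le)
    with \<open>\<exists>\<^sub>F t in at_top. d \<le> hat_sum c d t\<close> show False by blast
  qed
  then show ?thesis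
    using L assms(2) by (intro order_tendstoD(1)) auto
qed

lemma not_oscillating_inside:
  assumes "k < N" "a < b" "-s k \<le> a" "b \<le> s k"
    and below: "\<exists>\<^sub>F t in at_top. x k t < a" and above: "\<exists>\<^sub>F t in at_top. b < x k t"
  shows False
proof -
  define M where "M = 3 * N + 1"
  obtain d c where "0 < d" and inside: "\<And>l. l < M \<Longrightarrow> a < c l - d \<and> c l + d < b"
    and disjoint: "\<And>l l' p. p \<in> {c l - d .. c l + d} \<Longrightarrow> p \<in> {c l' - d .. c l' + d} \<Longrightarrow> l = l'"
    using disjoint_windows[OF assms(2)] by blast
  define good where "good l \<longleftrightarrow> (\<forall>j<N. s j \<notin> {c l - d .. c l + d} \<and> -s j \<notin> {c l - d .. c l + d})" for l
  have "\<forall>\<^sub>F t in at_top. \<forall>l\<in>{l. l < M \<and> good l}. d / 2 < hat_sum (c l) d t"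
    using \<open>0 < d\<close> inside assms(3,4) below above
    by (intro eventually_ball_finite ballI hat_sum_eventually_gt[OF assms(1)]) (auto simp: good_def)
  then obtain t where large: "\<And>l. l < M \<Longrightarrow> good l \<Longrightarrow> d / 2 < hat_sum (c l) d t"
    by (auto simp: eventually_at_top_linorder)
  \<comment> \<open>At time \<open>t\<close> the \<open>3 N\<close> points \<open>x j t\<close>, \<open>s j\<close>, \<open>- s j\<close> miss one of the \<open>M\<close> windows.\<close>
  define P where "P = (\<lambda>j. x j t) ` {..<N} \<union> s ` {..<N} \<union> (\<lambda>j. - s j) ` {..<N}"
  have "card P \<le> 3 * N"
    using card_Un_le[of "(\<lambda>j. x j t) ` {..<N}" "s ` {..<N}"]
      card_Un_le[of "(\<lambda>j. x j t) ` {..<N} \<union> s ` {..<N}" "(\<lambda>j. - s j) ` {..<N}"]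
      card_image_le[of "{..<N}" "\<lambda>j. x j t"] card_image_le[of "{..<N}" s]
      card_image_le[of "{..<N}" "\<lambda>j. - s j"]
    unfolding P_def by simp
  then obtain l where l: "l < M" "P \<inter> {c l - d .. c l + d} = {}"
    using exists_index_avoiding[of P M "\<lambda>l. {c l - d .. c l + d}"] disjoint by (auto simp: P_def M_def)
  then have "good l" by (auto simp: good_def P_def)
  moreover have "hat_sum (c l) d t = 0"
    unfolding hat_sum_def
  proof (intro sum.neutral ballI)
    fix j assume "j \<in> {..<N}"
    then have "x j t \<notin> {c l - d .. c l + d}" using l by (auto simp: P_def)
    then show "(if - s j < c l - d \<and> c l + d < s j then hat (c l) d (x j t) else 0) = 0"
      using hat_eq_0_outside[OF \<open>0 < d\<close>, of "x j t" "c l"] by auto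
  qed
  ultimately show False using large[OF l(1)] \<open>0 < d\<close> by simp
qed

lemma x_convergent:
  assumes "k < N"
  shows "\<exists>L. (x k \<longlongrightarrow> L) at_top"
proof (rule ccontr)
  assume not_convergent: "\<not> ?thesis"
  obtain R where R: "\<forall>i<N. \<forall>t\<ge>0. \<bar>x i t\<bar> \<le> R" using x_bounded by blast
  have "\<forall>\<^sub>F t in at_top. \<bar>x k t\<bar> \<le> R"
    using eventually_ge_at_top[of 0] by eventually_elim (use assms R in auto)
  then obtain a b where ab: "a < b" and below: "\<exists>\<^sub>F t in at_top. x k t < a"
    and above: "\<exists>\<^sub>F t in at_top. b < x k t"
    using bounded_nonconvergent_oscillates not_convergent by blast
  interpret neg: saturated_consensus N s \<alpha> "\<lambda>i t. - x i t" amax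
    by (rule saturated_consensus_uminus)
  consider "s k < b" | "a < - s k" | "- s k \<le> a" "b \<le> s k" by linarith
  then show False
  proof cases
    case 1
    show False by (rule not_oscillating_above[OF assms ab 1 below above])
  next
    case 2
    show False
      by (rule neg.not_oscillating_above[OF assms, of "-b" "-a"]) (use ab 2 below above in auto)
  next
    case 3
    show False by (rule not_oscillating_inside[OF assms ab 3 below above])
  qed
qed


text \<open>Flows between agents of \<open>U\<close> cancel by symmetry of the weights, so only the flow across
  the cut between \<open>U\<close> and its complement remains.\<close>
lemma sum_rhs_eq_cut:
  assumes "U \<subseteq> {..<N}" "0 \<le> \<tau>"
  shows "(\<Sum>k\<in>U. rhs k \<tau>)
    = (\<Sum>k\<in>U. \<Sum>l\<in>{..<N} - U. \<alpha> k l \<tau> * (sat (s l) (x l \<tau>) - sat (s k) (x k \<tau>)))"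
proof -
  define f where "f k l = \<alpha> k l \<tau> * (sat (s l) (x l \<tau>) - sat (s k) (x k \<tau>))" for k l
  have "(\<Sum>k\<in>U. \<Sum>l\<in>U. f k l) = (\<Sum>k\<in>U. \<Sum>l\<in>U. - f k l)"
  proof (subst sum.swap, intro sum.cong refl)
    fix k l assume "k \<in> U" "l \<in> U"
    then have "\<alpha> l k \<tau> = \<alpha> k l \<tau>" using assms weight_sym[of l k \<tau>] by auto
    then show "f l k = - f k l" by (simp add: f_def algebra_simps)
  qed
  then have internal: "(\<Sum>k\<in>U. \<Sum>l\<in>U. f k l) = 0" by (simp add: sum_negf)
  have "(\<Sum>k\<in>U. rhs k \<tau>) = (\<Sum>k\<in>U. (\<Sum>l\<in>U. f k l) + (\<Sum>l\<in>{..<N} - U. f k l))"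
    unfolding sat_rhs_def f_def[symmetric]
    using sum.subset_diff[OF assms(1), of "f _"] by (simp add: add.commute)
  then show ?thesis by (simp add: sum.distrib internal[unfolded f_def] f_def)
qed

text \<open>If two saturated limits differ, the agents above their midpoint lose mass at rate at least
  a multiple of \<open>\<alpha> p q\<close> in the long run; since the states stay bounded, \<open>\<alpha> p q\<close> is integrable.\<close>
lemma weight_nn_integral_finite_if_sat_limits_differ:
  assumes limits: "\<And>k. k < N \<Longrightarrow> (x k \<longlongrightarrow> X k) at_top" and "p < N" "q < N"
    and differ: "sat (s q) (X q) < sat (s p) (X p)"
  shows "(\<integral>\<^sup>+t\<in>{0..}. ennreal (\<alpha> p q t) \<partial>lebesgue) < \<infinity>"
proof -
  define y where "y k t = sat (s k) (x k t)" for k t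
  define Y where "Y k = sat (s k) (X k)" for k
  define \<delta> where "\<delta> = (Y p - Y q) / 2"
  define U where "U = {k. k < N \<and> (Y p + Y q) / 2 < Y k}"
  have "0 < \<delta>" "p \<in> U" "q \<notin> U" "U \<subseteq> {..<N}"
    using differ \<open>p < N\<close> by (auto simp: \<delta>_def U_def Y_def)
  then have "finite U" using finite_subset by blast
  have y_limit: "(y k \<longlongrightarrow> Y k) at_top" if "k < N" for k
    unfolding y_def Y_def using isCont_tendsto_compose[OF isCont_sat[OF s_pos[OF that]] limits[OF that]] .
  have "\<forall>\<^sub>F t in at_top. 0 \<le> t \<and> (\<forall>k\<in>U. \<forall>l\<in>{..<N} - U. y l t < y k t) \<and> \<delta> < y p t - y q t"
  proof (intro eventually_conj eventually_ge_at_top eventually_ball_finite ballI)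
    show "finite U" "finite ({..<N} - U)" using \<open>finite U\<close> by auto
    fix k l assume "k \<in> U" "l \<in> {..<N} - U"
    then have "\<forall>\<^sub>F t in at_top. 0 < y k t - y l t"
      using y_limit[of k] y_limit[of l] by (intro order_tendstoD(1)[OF tendsto_diff]) (auto simp: U_def)
    then show "\<forall>\<^sub>F t in at_top. y l t < y k t" by eventually_elim simp
  next
    show "\<forall>\<^sub>F t in at_top. \<delta> < y p t - y q t"
      using \<open>p < N\<close> \<open>q < N\<close> \<open>0 < \<delta>\<close>
      by (intro order_tendstoD(1)[OF tendsto_diff[OF y_limit y_limit]]) (auto simp: \<delta>_def)
  qed
  then obtain T where T: "0 \<le> T" "\<And>t. T \<le> t \<Longrightarrow> (\<forall>k\<in>U. \<forall>l\<in>{..<N} - U. y l t < y k t) \<and> \<delta> < y p t - y q t"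
    unfolding eventually_at_top_linorder by (metis order_refl order_trans)
  define \<phi> where "\<phi> t = - (\<Sum>k\<in>U. rhs k t) / \<delta>" for t
  have "\<alpha> p q t \<le> \<phi> t" and "0 \<le> \<phi> t" if "T \<le> t" for t
  proof -
    have cut: "- (\<Sum>k\<in>U. rhs k t) = (\<Sum>k\<in>U. \<Sum>l\<in>{..<N} - U. \<alpha> k l t * (y k t - y l t))"
      using sum_rhs_eq_cut[OF \<open>U \<subseteq> {..<N}\<close>] T(1) that
      by (simp add: y_def sum_negf[symmetric] algebra_simps)
    have nonneg: "0 \<le> \<alpha> k l t * (y k t - y l t)" if "k \<in> U" "l \<in> {..<N} - U" for k l
      using that T \<open>T \<le> t\<close> \<open>U \<subseteq> {..<N}\<close> weight_nonneg[of k l t]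
      by (intro mult_nonneg_nonneg) (auto simp: less_imp_le)
    have "\<delta> * \<alpha> p q t \<le> \<alpha> p q t * (y p t - y q t)"
      using T(2)[OF that] weight_nonneg[OF \<open>p < N\<close> \<open>q < N\<close>, of t] T(1) that
      by (metis less_imp_le mult.commute mult_left_mono order_trans)
    also have "\<dots> \<le> (\<Sum>l\<in>{..<N} - U. \<alpha> p l t * (y p t - y l t))"
      using \<open>q < N\<close> \<open>q \<notin> U\<close> \<open>p \<in> U\<close> nonneg by (intro member_le_sum) auto
    also have "\<dots> \<le> - (\<Sum>k\<in>U. rhs k t)"
      unfolding cut using \<open>p \<in> U\<close> \<open>finite U\<close> nonneg by (intro member_le_sum sum_nonneg) auto
    finally show "\<alpha> p q t \<le> \<phi> t"
      unfolding \<phi>_def using \<open>0 < \<delta>\<close> by (subst pos_le_divide_eq) (auto simp: mult.commute)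
    then show "0 \<le> \<phi> t"
      using weight_nonneg[OF \<open>p < N\<close> \<open>q < N\<close>, of t] T(1) that by linarith
  qed
  moreover obtain R where R: "\<And>i t. i < N \<Longrightarrow> 0 \<le> t \<Longrightarrow> \<bar>x i t\<bar> \<le> R" using x_bounded by blast
  have "set_integrable lebesgue {T..t} \<phi>" and "integral {T..t} \<phi> \<le> real N * (2 * R) / \<delta>" if "T \<le> t" for t
  proof -
    have "set_integrable lebesgue {T..t} (rhs k)" if "k \<in> U" for k
    proof (rule set_integrable_subset)
      show "set_integrable lebesgue {0..t} (rhs k)"
        using rhs_set_integrable[of k t] \<open>U \<subseteq> {..<N}\<close> T(1) \<open>T \<le> t\<close> that by auto
    qed (use T(1) in auto)
    then have "integrable lebesgue (\<lambda>\<tau>. \<Sum>k\<in>U. indicator {T..t} \<tau> *\<^sub>R rhs k \<tau>)"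
      unfolding set_integrable_def by (intro Bochner_Integration.integrable_sum) auto
    then have "set_integrable lebesgue {T..t} (\<lambda>\<tau>. (- 1 / \<delta>) * (\<Sum>k\<in>U. rhs k \<tau>))"
      by (intro set_integrable_mult_right) (simp add: set_integrable_def sum_distrib_left)
    moreover have "\<phi> = (\<lambda>\<tau>. (- 1 / \<delta>) * (\<Sum>k\<in>U. rhs k \<tau>))" by (simp add: \<phi>_def fun_eq_iff)
    ultimately show "set_integrable lebesgue {T..t} \<phi>" by simp
    have increments: "rhs k integrable_on {T..t}" "integral {T..t} (rhs k) = x k t - x k T" if "k \<in> U" for k
      using x_increment[of k T t] that \<open>U \<subseteq> {..<N}\<close> T(1) \<open>T \<le> t\<close> by auto
    have "integral {T..t} \<phi> = (\<Sum>k\<in>U. x k T - x k t) / \<delta>"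
      unfolding \<phi>_def using increments
      by (simp add: integral_sum[OF \<open>finite U\<close>] sum_subtractf) (simp add: diff_divide_distrib)
    also have "\<dots> \<le> (\<Sum>k<N. 2 * R) / \<delta>"
    proof (intro divide_right_mono order_trans[OF sum_mono sum_mono2])
      show "x k T - x k t \<le> 2 * R" if "k \<in> U" for k
        using R[of k T] R[of k t] that \<open>U \<subseteq> {..<N}\<close> T(1) \<open>T \<le> t\<close> by auto
    qed (use \<open>U \<subseteq> {..<N}\<close> \<open>0 < \<delta>\<close> R[of p 0] \<open>p < N\<close> in auto)
    finally show "integral {T..t} \<phi> \<le> real N * (2 * R) / \<delta>" by simp
  qed
  ultimately show ?thesis
    using weight_le[OF \<open>p < N\<close> \<open>q < N\<close>]
    by (intro set_nn_integral_atLeast_0_finite[OF T(1), where B = amax and \<phi> = \<phi>]) auto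
qed

lemma integral_edge_imp_sat_limits_eq:
  assumes limits: "\<And>k. k < N \<Longrightarrow> (x k \<longlongrightarrow> X k) at_top" and "p < N" "q < N"
    and edge: "integral_edge \<alpha> p q"
  shows "sat (s p) (X p) = sat (s q) (X q)"
proof -
  have "(\<integral>\<^sup>+t\<in>{0..}. ennreal (\<alpha> q p t) \<partial>lebesgue) = (\<integral>\<^sup>+t\<in>{0..}. ennreal (\<alpha> p q t) \<partial>lebesgue)"
    using weight_sym[OF \<open>p < N\<close> \<open>q < N\<close>] by (intro nn_integral_cong) (auto simp: indicator_def)
  then show ?thesis
    using weight_nn_integral_finite_if_sat_limits_differ[OF limits assms(2,3)]
      weight_nn_integral_finite_if_sat_limits_differ[OF limits assms(3,2)] edge
    unfolding integral_edge_def by (metis linorder_neqE_linordered_idom order.irrefl)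
qed

end

theorem lemma8:
  fixes N :: nat and s :: "nat \<Rightarrow> real" and \<alpha> :: "nat \<Rightarrow> nat \<Rightarrow> real \<Rightarrow> real"
    and x :: "nat \<Rightarrow> real \<Rightarrow> real" and \<alpha>min \<alpha>max :: real
  assumes s_pos: "\<forall>i<N. s i > 0"
    and s_dec: "\<forall>i j. i < j \<and> j < N \<longrightarrow> s i > s j"
    and weights: "standing_weights N \<alpha>"
    and conn: "integrally_connected N \<alpha>"
    and amin: "0 < \<alpha>min" and amax: "\<alpha>min \<le> \<alpha>max"
    and range: "\<forall>i<N. \<forall>j<N. \<forall>t\<ge>0. \<alpha> i j t = 0 \<or> (\<alpha>min \<le> \<alpha> i j t \<and> \<alpha> i j t \<le> \<alpha>max)"
    and sol: "caratheodory_solution N s \<alpha> x"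
  shows "\<forall>i<N. \<exists>xs. (x i \<longlongrightarrow> xs) at_top \<and>
            (i < N - 1 \<longrightarrow> xs \<in> {- s (N - 1) .. s (N - 1)})"
proof -
  interpret saturated_consensus N s \<alpha> x \<alpha>max
  proof
    show "inj_on s {..<N}"
      using s_dec by (intro inj_onI) (metis lessThan_iff linorder_neqE_nat order.irrefl)
    show "\<alpha> i j t \<le> \<alpha>max" if "i < N" "j < N" "0 \<le> t" for i j t
    proof -
      have "\<alpha> i j t = 0 \<or> \<alpha> i j t \<le> \<alpha>max" using range that by blast
      then show ?thesis using amin amax by auto
    qed
  qed (use s_pos weights range amin amax sol in \<open>auto simp: standing_weights_def\<close>)
  obtain X where X: "\<And>k. k < N \<Longrightarrow> (x k \<longlongrightarrow> X k) at_top"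
    using x_convergent by metis
  have consensus: "sat (s i) (X i) = sat (s (N - 1)) (X (N - 1))" if "i < N" for i
  proof -
    have "(\<lambda>a b. a < N \<and> b < N \<and> integral_edge \<alpha> a b)\<^sup>*\<^sup>* i (N - 1)"
      using conn that unfolding integrally_connected_def by simp
    then show ?thesis
    proof (induction rule: rtranclp_induct)
      case (step y z)
      then show ?case using integral_edge_imp_sat_limits_eq[OF X, of y z] by simp
    qed simp
  qed
  show ?thesis
  proof (intro allI impI)
    fix i assume "i < N"
    show "\<exists>xs. (x i \<longlongrightarrow> xs) at_top \<and> (i < N - 1 \<longrightarrow> xs \<in> {- s (N - 1) .. s (N - 1)})"
    proof (intro exI conjI impI)
      show "(x i \<longlongrightarrow> X i) at_top" using X[OF \<open>i < N\<close>] .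
      assume "i < N - 1"
      then have "0 < s (N - 1)" "s (N - 1) < s i" using s_pos s_dec by auto
      moreover have "\<bar>sat (s i) (X i)\<bar> \<le> s (N - 1)"
        using consensus[OF \<open>i < N\<close>] abs_sat_le[OF \<open>0 < s (N - 1)\<close>] by simp
      ultimately have "\<bar>X i\<bar> \<le> s (N - 1)" by (rule abs_le_if_abs_sat_le)
      then show "X i \<in> {- s (N - 1) .. s (N - 1)}" by (simp add: abs_le_iff)
    qed
  qed
qed

end
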